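(* Let $\mathsf{u},\mathsf{v}\in V$ be consistently oriented spacelike vectors, let $p\in E$ and $\mathsf{w}\in V$, and suppose the crooked planes $\mathcal{C}(\mathsf{u},p)$ and $\mathcal{C}(\mathsf{v},p+\mathsf{w})$ are disjoint. Then $\mathcal{C}(\mathsf{v},p+\mathsf{w})\subset\mathcal{H}(-\mathsf{u},p)$.
   Context: $V=\mathbb{R}^3$ with Lorentzian inner product $x\cdot y=x_1y_1+x_2y_2-x_3y_3$ and standard orientation; $E$ is the affine space with translation space $V$. Null: $x\cdot x=0$; spacelike: $x\cdot x>0$; future-pointing: third coordinate positive. For spacelike $\mathsf{v}$, $\mathsf{v}^-,\mathsf{v}^+$ are the two future-pointing null vectors of Euclidean length $1$ in $\mathsf{v}^\perp$, labelled so that $(\mathsf{v}^-,\mathsf{v}^+,\mathsf{v})$ is positively oriented. For null $x$, $\mathcal{P}(x)$ is the set of spacelike $w\in x^\perp$ with $w^+$ a positive multiple of $x$. The crooked plane $\mathcal{C}(\mathsf{v},p)=(p+\mathcal{P}(\mathsf{v}^+))\cup(p+\mathcal{P}(\mathsf{v}^-))\cup(p+\{x:\mathsf{v}\cdot x=0,\ x\cdot x\le0\})$. The crooked half-space $\mathcal{H}(\mathsf{v},p)$ is the set of $q\in E$ with $(q-p)\cdot\mathsf{v}^+\le0$ if $(q-p)\cdot\mathsf{v}\ge0$, and $(q-p)\cdot\mathsf{v}^-\ge0$ if $(q-p)\cdot\mathsf{v}\le0$ (both when $(q-p)\cdot\mathsf{v}=0$). Spacelike vectors $\mathsf{v}_1,\dots,\mathsf{v}_n$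 are consistently oriented if for all $i\ne j$: $\mathsf{v}_i\cdot\mathsf{v}_j<0$, $\mathsf{v}_i\cdot\mathsf{v}_j^+\le0$ and $\mathsf{v}_i\cdot\mathsf{v}_j^-\le0$. *)

theory Defs
  imports "HOL-Analysis.Analysis"
begin

text \<open>Minkowski space V = R^3 with Lorentzian inner product; E identified with V (points as real^3).\<close>

definition lprod :: "real^3 \<Rightarrow> real^3 \<Rightarrow> real" where
  "lprod x y = x$1 * y$1 + x$2 * y$2 - x$3 * y$3"

definition is_null :: "real^3 \<Rightarrow> bool" where
  "is_null x \<longleftrightarrow> lprod x x = 0"

definition spacelike :: "real^3 \<Rightarrow> bool" where
  "spacelike x \<longleftrightarrow> lprod x x > 0"

definition future_pointing :: "real^3 \<Rightarrow> bool" where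
  "future_pointing x \<longleftrightarrow> x$3 > 0"

definition pos_oriented :: "real^3 \<Rightarrow> real^3 \<Rightarrow> real^3 \<Rightarrow> bool" where
  "pos_oriented a b c \<longleftrightarrow> det (transpose (vector [a, b, c] :: real^3^3)) > 0"

definition null_frame_cond :: "real^3 \<Rightarrow> real^3 \<Rightarrow> bool" where
  "null_frame_cond v x \<longleftrightarrow> is_null x \<and> future_pointing x \<and> norm x = 1 \<and> lprod v x = 0"

definition null_pair :: "real^3 \<Rightarrow> (real^3) \<times> (real^3)" where
  "null_pair v = (THE (a, b). null_frame_cond v a \<and> null_frame_cond v b \<and> pos_oriented a b v)"

definition vminus :: "real^3 \<Rightarrow> real^3" where
  "vminus v = fst (null_pair v)"

definition vplus :: "real^3 \<Rightarrow> real^3" where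
  "vplus v = snd (null_pair v)"

definition Pset :: "real^3 \<Rightarrow> (real^3) set" where
  "Pset x = {w. spacelike w \<and> lprod x w = 0 \<and> (\<exists>c>0. vplus w = c *\<^sub>R x)}"

definition crooked_plane :: "real^3 \<Rightarrow> real^3 \<Rightarrow> (real^3) set" where
  "crooked_plane v p =
     ((\<lambda>w. p + w) ` Pset (vplus v)) \<union> ((\<lambda>w. p + w) ` Pset (vminus v)) \<union>
     ((\<lambda>x. p + x) ` {x. lprod v x = 0 \<and> lprod x x \<le> 0})"

definition crooked_halfspace :: "real^3 \<Rightarrow> real^3 \<Rightarrow> (real^3) set" where
  "crooked_halfspace v p = {q.
     (lprod (q - p) v \<ge> 0 \<longrightarrow> lprod (q - p) (vplus v) \<le> 0) \<and>
     (lprod (q - p) v \<le> 0 \<longrightarrow> lprod (q - p) (vminus v) \<ge> 0)}"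

definition consistently_oriented :: "(real^3) list \<Rightarrow> bool" where
  "consistently_oriented vs \<longleftrightarrow> (\<forall>v\<in>set vs. spacelike v) \<and>
     (\<forall>i<length vs. \<forall>j<length vs. i \<noteq> j \<longrightarrow>
        lprod (vs!i) (vs!j) < 0 \<and> lprod (vs!i) (vplus (vs!j)) \<le> 0 \<and>
        lprod (vs!i) (vminus (vs!j)) \<le> 0)"

end

theory Submission
  imports Defs
begin

text \<open>
  With \<open>P = \<langle>z, u\<^sup>+\<rangle>\<close>, \<open>M = \<langle>z, u\<^sup>-\<rangle>\<close>, \<open>S = \<langle>z, u\<rangle>\<close> as coordinates of \<open>z = q - p\<close>, the crooked
  plane \<open>C(u, p)\<close> is the zero set of a continuous function \<open>F\<close> that is \<open>\<ge> 0\<close> off the crooked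
  half-space \<open>H(-u, p)\<close> and \<open>< 0\<close> on the open side facing it. The translate \<open>C(v, p + w)\<close> is
  connected, being a union of four convex sectors through its vertex. Consistent orientation
  makes it reach the side where \<open>F < 0\<close>: far out along the ray of direction \<open>\<plusminus>v\<close> in one of its
  wings, or, when \<open>v\<close> is a negative multiple of \<open>u\<close>, along a null ray of its stem, unless the two
  stems meet. So a point of \<open>C(v, p + w)\<close> outside \<open>H(-u, p)\<close> would force a zero of \<open>F\<close> on
  \<open>C(v, p + w)\<close>, i.e. a common point of the two crooked planes.
\<close>

section \<open>Coordinates and the Lorentzian form\<close>

lemma vec3_eq_iff: "(x::real^3) = y \<longleftrightarrow> x$1 = y$1 \<and> x$2 = y$2 \<and> x$3 = y$3"
  by (simp add: vec_eq_iff forall_3)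

lemma norm_vec3: "norm (x::real^3) = sqrt (x$1^2 + x$2^2 + x$3^2)"
  by (simp add: norm_eq_sqrt_inner inner_vec_def sum_3 power2_eq_square)

lemma lprod_commute: "lprod x y = lprod y x"
  by (simp add: lprod_def algebra_simps)

lemma lprod_add_left [simp]: "lprod (x + y) z = lprod x z + lprod y z"
  and lprod_add_right [simp]: "lprod z (x + y) = lprod z x + lprod z y"
  and lprod_diff_left [simp]: "lprod (x - y) z = lprod x z - lprod y z"
  and lprod_diff_right [simp]: "lprod z (x - y) = lprod z x - lprod z y"
  and lprod_scaleR_left [simp]: "lprod (c *\<^sub>R x) z = c * lprod x z"
  and lprod_scaleR_right [simp]: "lprod z (c *\<^sub>R x) = c * lprod z x"
  and lprod_minus_left [simp]: "lprod (- x) z = - lprod x z"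
  and lprod_minus_right [simp]: "lprod z (- x) = - lprod z x"
  and lprod_zero_left [simp]: "lprod 0 z = 0"
  and lprod_zero_right [simp]: "lprod z 0 = 0"
  by (simp_all add: lprod_def algebra_simps)

lemma continuous_on_lprod_left [continuous_intros]:
  "continuous_on S f \<Longrightarrow> continuous_on S (\<lambda>z. lprod (f z) c)"
  unfolding lprod_def by (intro continuous_intros)

definition triple :: "real^3 \<Rightarrow> real^3 \<Rightarrow> real^3 \<Rightarrow> real" where
  "triple a b c = a$1*b$2*c$3 + a$2*b$3*c$1 + a$3*b$1*c$2 - a$1*b$3*c$2 - a$2*b$1*c$3 - a$3*b$2*c$1"

lemma pos_oriented_iff_triple: "pos_oriented a b c \<longleftrightarrow> triple a b c > 0"
  unfolding pos_oriented_def by (simp add: det_3 transpose_def triple_def algebra_simps)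

lemma triple_linear_left:
  "triple (a *\<^sub>R x + b *\<^sub>R y + c *\<^sub>R z) p q = a * triple x p q + b * triple y p q + c * triple z p q"
  and triple_linear_right:
  "triple p q (a *\<^sub>R x + b *\<^sub>R y + c *\<^sub>R z) = a * triple p q x + b * triple p q y + c * triple p q z"
  and triple_scaleR_right: "triple p q (c *\<^sub>R x) = c * triple p q x"
  by (simp_all add: triple_def algebra_simps)

lemma triple_swap: "triple b a c = - triple a b c"
  by (simp add: triple_def algebra_simps)

lemma triple_repeat: "triple a a c = 0" "triple a b a = 0" "triple a b b = 0"
  by (simp_all add: triple_def algebra_simps)

section \<open>Future-pointing null vectors\<close>

lemma null_frame_cond_iff:
  "null_frame_cond v x \<longleftrightarrow>
     x$1^2 + x$2^2 = x$3^2 \<and> x$3 > 0 \<and> x$1^2 + x$2^2 + x$3^2 = 1 \<and> lprod v x = 0"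
  by (auto simp: null_frame_cond_def is_null_def future_pointing_def norm_vec3 lprod_def
      power2_eq_square)

lemma null_frame_cond_lprod:
  assumes "null_frame_cond v a"
  shows "lprod a v = 0" "lprod v a = 0" "lprod a a = 0"
  using assms by (auto simp: null_frame_cond_def is_null_def lprod_commute)

lemma horizontal_lagrange_identity:
  fixes a b :: "real^3"
  shows "(a$1*b$1 + a$2*b$2)^2 + (a$1*b$2 - a$2*b$1)^2 = (a$1^2 + a$2^2) * (b$1^2 + b$2^2)"
  by (simp add: algebra_simps power2_eq_square)

lemma lprod_future_null_le:
  assumes "is_null a" "future_pointing a" "is_null b" "future_pointing b"
  shows "lprod a b \<le> 0"
proof -
  have a: "a$1^2 + a$2^2 = a$3^2" "a$3 > 0" and b: "b$1^2 + b$2^2 = b$3^2" "b$3 > 0"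
    using assms by (auto simp: is_null_def future_pointing_def lprod_def power2_eq_square)
  have "(a$1*b$1 + a$2*b$2)^2 + (a$1*b$2 - a$2*b$1)^2 = (a$3*b$3)^2"
    using horizontal_lagrange_identity[of a b] a(1) b(1) by (simp add: power_mult_distrib)
  hence "\<bar>a$1*b$1 + a$2*b$2\<bar> \<le> \<bar>a$3*b$3\<bar>"
    by (simp add: abs_le_square_iff) (smt (verit) zero_le_power2)
  hence "a$1*b$1 + a$2*b$2 \<le> a$3*b$3"
    using a(2) b(2) by simp
  thus ?thesis by (simp add: lprod_def)
qed

lemma future_null_unit_eq:
  assumes "null_frame_cond v a" "null_frame_cond w b" "lprod a b = 0"
  shows "a = b"
proof -
  have a: "a$1^2 + a$2^2 = a$3^2" "a$3 > 0" "a$1^2 + a$2^2 + a$3^2 = 1"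
    and b: "b$1^2 + b$2^2 = b$3^2" "b$3 > 0" "b$1^2 + b$2^2 + b$3^2 = 1"
    using assms by (auto simp: null_frame_cond_iff)
  have e: "a$1*b$1 + a$2*b$2 = a$3*b$3"
    using assms(3) by (simp add: lprod_def)
  have "(a$1*b$2 - a$2*b$1)^2 = 0"
    using horizontal_lagrange_identity[of a b] a b e by (simp add: power_mult_distrib)
  hence c: "a$1*b$2 = a$2*b$1" by simp
  \<comment> \<open>equality in the Cauchy--Schwarz inequality makes \<open>a\<close> and \<open>b\<close> parallel\<close>
  have "a$3*(a$1*b$3 - a$3*b$1) = a$2*(a$1*b$2 - a$2*b$1)"
    using a(1) e by algebra
  hence c1: "a$1*b$3 = a$3*b$1" using c a(2) by simp
  have "a$3*(a$2*b$3 - a$3*b$2) = - a$1*(a$1*b$2 - a$2*b$1)"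
    using a(1) e by algebra
  hence c2: "a$2*b$3 = a$3*b$2" using c a(2) by simp
  have "a$3^2 = b$3^2" using a(1,3) b(1,3) by linarith
  hence "a$3 = b$3" using a(2) b(2) by (simp add: power2_eq_iff)
  thus ?thesis unfolding vec3_eq_iff using c1 c2 a(2) by auto
qed

lemma lprod_future_null_less:
  assumes "null_frame_cond v a" "null_frame_cond w b" "a \<noteq> b"
  shows "lprod a b < 0"
  using lprod_future_null_le[of a b] future_null_unit_eq[OF assms(1,2)] assms
  by (fastforce simp: null_frame_cond_def)

section \<open>The null frame of a spacelike vector\<close>

lemma eq_0_if_lprod_orthogonal:
  assumes "triple a b w \<noteq> 0" "lprod e a = 0" "lprod e b = 0" "lprod e w = 0"
  shows "e = 0"
proof -
  have "e$1 * triple a b w = 0" "e$2 * triple a b w = 0" "e$3 * triple a b w = 0"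
    using assms(2-4) unfolding lprod_def triple_def by algebra+
  thus ?thesis using assms(1) by (simp add: vec3_eq_iff)
qed

lemma null_frame_decomposition:
  assumes "lprod a w = 0" "lprod b w = 0" "lprod a a = 0" "lprod b b = 0"
    "lprod a b \<noteq> 0" "lprod w w \<noteq> 0" "triple a b w \<noteq> 0"
  shows "x = (lprod x b / lprod a b) *\<^sub>R a + (lprod x a / lprod a b) *\<^sub>R b
           + (lprod x w / lprod w w) *\<^sub>R w"
proof -
  have "x - ((lprod x b / lprod a b) *\<^sub>R a + (lprod x a / lprod a b) *\<^sub>R b
          + (lprod x w / lprod w w) *\<^sub>R w) = 0"
    by (rule eq_0_if_lprod_orthogonal[OF assms(7)])
      (use assms in \<open>auto simp: lprod_commute[of b a] lprod_commute[of w a] lprod_commute[of w b]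
        lprod_commute[of x]\<close>)
  thus ?thesis by simp
qed

lemma lprod_self_null_frame:
  assumes "lprod a w = 0" "lprod b w = 0" "lprod a a = 0" "lprod b b = 0"
    "lprod a b \<noteq> 0" "lprod w w \<noteq> 0" "triple a b w \<noteq> 0"
  shows "lprod x x = 2 * lprod x a * lprod x b / lprod a b + (lprod x w)^2 / lprod w w"
proof -
  have "lprod x x = lprod x ((lprod x b / lprod a b) *\<^sub>R a + (lprod x a / lprod a b) *\<^sub>R b
                              + (lprod x w / lprod w w) *\<^sub>R w)"
    using null_frame_decomposition[OF assms, of x] by simp
  thus ?thesis by (simp add: field_simps power2_eq_square)
qed

text \<open>For \<open>k\<^sup>2 = w\<^sub>1\<^sup>2 + w\<^sub>2\<^sup>2 - w\<^sub>3\<^sup>2\<close> the two signs of \<open>k\<close> give the two future null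
  unit vectors orthogonal to \<open>w\<close>.\<close>

definition null_candidate :: "real^3 \<Rightarrow> real \<Rightarrow> real^3" where
  "null_candidate w k = (let r = w$1^2 + w$2^2 in
     vector [(w$3*w$1 - k*w$2) / (sqrt 2 * r), (w$3*w$2 + k*w$1) / (sqrt 2 * r), 1 / sqrt 2])"

lemma null_candidate_components:
  assumes "r = w$1^2 + w$2^2"
  shows "null_candidate w k $ 1 = (w$3*w$1 - k*w$2) / (sqrt 2 * r)"
    and "null_candidate w k $ 2 = (w$3*w$2 + k*w$1) / (sqrt 2 * r)"
    and "null_candidate w k $ 3 = 1 / sqrt 2"
  using assms by (simp_all add: null_candidate_def Let_def)

lemma null_frame_cond_null_candidate:
  assumes r_def: "r = w$1^2 + w$2^2" and r: "r > 0" and k: "k^2 = r - w$3^2"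
  shows "null_frame_cond w (null_candidate w k)"
proof -
  have "(w$3*w$1 - k*w$2)^2 + (w$3*w$2 + k*w$1)^2 = (w$3^2 + k^2) * r"
    by (simp add: r_def algebra_simps power2_eq_square)
  also have "\<dots> = r^2" using k by (simp add: power2_eq_square)
  finally have "(w$3*w$1 - k*w$2)^2 + (w$3*w$2 + k*w$1)^2 = r^2" .
  hence horizontal: "(null_candidate w k $ 1)^2 + (null_candidate w k $ 2)^2 = 1/2"
    using r by (simp add: null_candidate_components[OF r_def] power_divide
        add_divide_distrib[symmetric] power_mult_distrib)
  have "w$1*(w$3*w$1 - k*w$2) + w$2*(w$3*w$2 + k*w$1) = w$3 * r"
    by (simp add: r_def algebra_simps power2_eq_square)
  moreover have "lprod w (null_candidate w k)
      = (w$1*(w$3*w$1 - k*w$2) + w$2*(w$3*w$2 + k*w$1)) / (sqrt 2 * r) - w$3 / sqrt 2"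
    using r by (simp add: lprod_def null_candidate_components[OF r_def] field_simps)
  ultimately have "lprod w (null_candidate w k) = 0"
    using r by simp
  with horizontal show ?thesis
    by (simp add: null_frame_cond_iff null_candidate_components(3)[OF refl] power_divide)
qed

lemma triple_null_candidates:
  assumes r_def: "r = w$1^2 + w$2^2" and r: "r > 0"
  shows "triple (null_candidate w k) (null_candidate w (- k)) w = k * (r - w$3^2) / r"
proof -
  define a where "a = null_candidate w k"
  define b where "b = null_candidate w (- k)"
  have "triple a b w = w$3 * (a$1*b$2 - a$2*b$1) + a$3 * (w$1 * (a$2 - b$2) + w$2 * (b$1 - a$1))"
    by (simp add: triple_def a_def b_def null_candidate_components(3)[OF refl] algebra_simps)
  also have "a$1*b$2 - a$2*b$1 = - k * w$3 / r"
  proof -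
    have "a$1*b$2 - a$2*b$1 = ((w$3*w$1 - k*w$2)*(w$3*w$2 - k*w$1)
        - (w$3*w$2 + k*w$1)*(w$3*w$1 + k*w$2)) / (2 * r^2)"
      using r by (simp add: a_def b_def null_candidate_components[OF r_def] field_simps
          power2_eq_square)
    also have "(w$3*w$1 - k*w$2)*(w$3*w$2 - k*w$1) - (w$3*w$2 + k*w$1)*(w$3*w$1 + k*w$2)
        = - 2*k*w$3*r"
      by (simp add: r_def algebra_simps power2_eq_square)
    finally show ?thesis using r by (simp add: power2_eq_square)
  qed
  also have "a$3 * (w$1 * (a$2 - b$2) + w$2 * (b$1 - a$1)) = k"
  proof -
    have "a$3 * (w$1 * (a$2 - b$2) + w$2 * (b$1 - a$1)) = k * (w$1^2 + w$2^2) / r"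
      using r by (simp add: a_def b_def null_candidate_components[OF r_def] field_simps
          power2_eq_square)
    thus ?thesis using r by (simp add: r_def[symmetric])
  qed
  finally show ?thesis
    using r by (simp add: a_def b_def field_simps power2_eq_square)
qed

lemma null_frame_exists:
  assumes "spacelike w"
  shows "\<exists>a b. null_frame_cond w a \<and> null_frame_cond w b \<and> pos_oriented a b w"
proof -
  define r where "r = w$1^2 + w$2^2"
  define k where "k = sqrt (r - w$3^2)"
  have gap: "r - w$3^2 > 0"
    using assms by (simp add: spacelike_def lprod_def r_def power2_eq_square)
  hence r: "r > 0" by (smt (verit) zero_le_power2)
  have k: "k > 0" "k^2 = r - w$3^2" "(- k)^2 = r - w$3^2"
    using gap by (simp_all add: k_def)
  have "triple (null_candidate w k) (null_candidate w (- k)) w > 0"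
    using triple_null_candidates[OF r_def r] k(1) gap r by simp
  thus ?thesis
    using null_frame_cond_null_candidate[OF r_def r k(2)] null_frame_cond_null_candidate[OF r_def r k(3)]
    by (auto simp: pos_oriented_iff_triple)
qed

lemma null_frame_cond_cases:
  assumes "spacelike w" "null_frame_cond w a" "null_frame_cond w b" "triple a b w \<noteq> 0"
    and "null_frame_cond w z"
  shows "z = a \<or> z = b"
proof -
  have "a \<noteq> b" using assms(4) triple_repeat by auto
  hence ab: "lprod a b \<noteq> 0" using lprod_future_null_less[OF assms(2,3)] by simp
  have "lprod z z = 2 * lprod z a * lprod z b / lprod a b + (lprod z w)^2 / lprod w w"
    by (rule lprod_self_null_frame)
      (use null_frame_cond_lprod[OF assms(2)] null_frame_cond_lprod[OF assms(3)] ab assms(1,4)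
        in \<open>auto simp: spacelike_def\<close>)
  hence "lprod z a * lprod z b = 0" using null_frame_cond_lprod[OF assms(5)] ab by simp
  thus ?thesis using future_null_unit_eq[OF assms(5) assms(2)] future_null_unit_eq[OF assms(5) assms(3)]
    by auto
qed

lemma vminus_vplus_eq:
  assumes "spacelike w" "null_frame_cond w a" "null_frame_cond w b" "pos_oriented a b w"
  shows "vminus w = a" "vplus w = b"
proof -
  have unique: "a' = a \<and> b' = b"
    if "null_frame_cond w a'" "null_frame_cond w b'" "pos_oriented a' b' w" for a' b'
  proof -
    have t: "triple a b w > 0" "triple a' b' w > 0"
      using assms(4) that(3) by (auto simp: pos_oriented_iff_triple)
    have "a' = a \<or> a' = b" "b' = a \<or> b' = b"
      using null_frame_cond_cases[OF assms(1-3) _ that(1)]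
        null_frame_cond_cases[OF assms(1-3) _ that(2)] t by auto
    moreover have "a' \<noteq> b'" using t triple_repeat by auto
    moreover have "\<not> (a' = b \<and> b' = a)" using t triple_swap[of b a w] by auto
    ultimately show ?thesis by auto
  qed
  have "null_pair w = (a, b)"
    unfolding null_pair_def
    by (rule the_equality) (use assms in \<open>auto dest: unique split: prod.splits\<close>)
  thus "vminus w = a" "vplus w = b" by (simp_all add: vminus_def vplus_def)
qed

lemma null_frame:
  assumes "spacelike w"
  shows "null_frame_cond w (vminus w)" "null_frame_cond w (vplus w)"
    "pos_oriented (vminus w) (vplus w) w"
  using null_frame_exists[OF assms] vminus_vplus_eq[OF assms] by auto

lemma null_frame_lprod:
  assumes "spacelike v"
  shows "lprod (vminus v) v = 0" "lprod (vplus v) v = 0" "lprod v (vminus v) = 0"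
    "lprod v (vplus v) = 0" "lprod (vminus v) (vminus v) = 0" "lprod (vplus v) (vplus v) = 0"
    "lprod (vminus v) (vplus v) < 0" "lprod v v > 0" "triple (vminus v) (vplus v) v > 0"
proof -
  note frame = null_frame[OF assms]
  show "lprod (vminus v) v = 0" "lprod (vplus v) v = 0" "lprod v (vminus v) = 0"
    "lprod v (vplus v) = 0" "lprod (vminus v) (vminus v) = 0" "lprod (vplus v) (vplus v) = 0"
    using null_frame_cond_lprod[OF frame(1)] null_frame_cond_lprod[OF frame(2)] by auto
  show D: "triple (vminus v) (vplus v) v > 0"
    using frame(3) by (simp add: pos_oriented_iff_triple)
  hence "vminus v \<noteq> vplus v" using triple_repeat by auto
  thus "lprod (vminus v) (vplus v) < 0" using lprod_future_null_less[OF frame(1,2)] by simp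
  show "lprod v v > 0" using assms by (simp add: spacelike_def)
qed

lemma vector_decomposition:
  assumes "spacelike v"
  shows "x = (lprod x (vplus v) / lprod (vminus v) (vplus v)) *\<^sub>R vminus v
     + (lprod x (vminus v) / lprod (vminus v) (vplus v)) *\<^sub>R vplus v + (lprod x v / lprod v v) *\<^sub>R v"
  using null_frame_lprod[OF assms] by (intro null_frame_decomposition) auto

lemma lprod_self_decomposition:
  assumes "spacelike v"
  shows "lprod x x = 2 * lprod x (vminus v) * lprod x (vplus v) / lprod (vminus v) (vplus v)
                     + (lprod x v)^2 / lprod v v"
  using null_frame_lprod[OF assms] by (intro lprod_self_null_frame) auto

lemma spacelike_scaleR:
  assumes "spacelike u" "c \<noteq> 0"
  shows "spacelike (c *\<^sub>R u)"
proof -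
  have "c * c > 0" using assms(2) by (metis not_real_square_gt_zero)
  thus ?thesis using assms(1) by (simp add: spacelike_def mult.assoc[symmetric])
qed

lemma vplus_vminus_scaleR_neg:
  assumes "spacelike u" "c < 0"
  shows "vplus (c *\<^sub>R u) = vminus u" "vminus (c *\<^sub>R u) = vplus u"
proof -
  have "spacelike (c *\<^sub>R u)" using spacelike_scaleR[OF assms(1)] assms(2) by simp
  moreover have "null_frame_cond (c *\<^sub>R u) a \<longleftrightarrow> null_frame_cond u a" for a
    using assms(2) by (simp add: null_frame_cond_def)
  moreover have "pos_oriented (vplus u) (vminus u) (c *\<^sub>R u)"
    using null_frame_lprod(9)[OF assms(1)] assms(2) triple_swap[of "vplus u" "vminus u" u]
    by (simp add: pos_oriented_iff_triple triple_scaleR_right mult_neg_pos)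
  ultimately show "vplus (c *\<^sub>R u) = vminus u" "vminus (c *\<^sub>R u) = vplus u"
    using vminus_vplus_eq null_frame[OF assms(1)] by auto
qed

lemma vplus_uminus: "spacelike u \<Longrightarrow> vplus (- u) = vminus u"
  and vminus_uminus: "spacelike u \<Longrightarrow> vminus (- u) = vplus u"
  using vplus_vminus_scaleR_neg[of u "-1"] by simp_all

section \<open>Crooked planes in coordinates\<close>

lemma mem_Pset_iff:
  assumes "norm e = 1"
  shows "x \<in> Pset e \<longleftrightarrow> spacelike x \<and> vplus x = e"
proof
  assume "x \<in> Pset e"
  then obtain c where x: "spacelike x" and c: "c > 0" "vplus x = c *\<^sub>R e"
    by (auto simp: Pset_def)
  have "norm (vplus x) = 1" using null_frame(2)[OF x] by (simp add: null_frame_cond_def)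
  hence "c = 1" using c assms by simp
  thus "spacelike x \<and> vplus x = e" using x c by simp
next
  assume "spacelike x \<and> vplus x = e"
  thus "x \<in> Pset e"
    using null_frame_lprod(2)[of x] by (auto simp: Pset_def intro!: exI[of _ 1])
qed

lemma vplus_eq_iff_triple_pos:
  assumes "spacelike x" "null_frame_cond x y" "null_frame_cond x e" "y \<noteq> e"
  shows "e = vplus x \<longleftrightarrow> triple y e x > 0"
proof -
  note frame = null_frame[OF assms(1)] and D = null_frame_lprod(9)[OF assms(1)]
  have "y = vminus x \<or> y = vplus x" "e = vminus x \<or> e = vplus x"
    using null_frame_cond_cases[OF assms(1) frame(1,2)] assms(2,3) D by auto
  moreover have "vminus x \<noteq> vplus x" using D triple_repeat by auto
  ultimately show ?thesis
    using assms(4) D triple_swap[of "vplus x" "vminus x" x] by auto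
qed

lemma triple_vplus_orthogonal:
  assumes "spacelike v" "lprod x (vplus v) = 0"
  shows "triple y (vplus v) x = (lprod x v / lprod v v)
      * ((lprod y (vplus v) / lprod (vminus v) (vplus v)) * triple (vminus v) (vplus v) v)"
proof -
  let ?N = "lprod (vminus v) (vplus v)"
  have "triple y (vplus v) x = (lprod x (vplus v) / ?N) * triple y (vplus v) (vminus v)
      + (lprod x (vminus v) / ?N) * triple y (vplus v) (vplus v)
      + (lprod x v / lprod v v) * triple y (vplus v) v"
    by (subst vector_decomposition[OF assms(1), of x]) (rule triple_linear_right)
  also have "\<dots> = (lprod x v / lprod v v) * triple y (vplus v) v"
    using assms(2) by (simp add: triple_repeat)
  also have "triple y (vplus v) v = (lprod y (vplus v) / ?N) * triple (vminus v) (vplus v) v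
      + (lprod y (vminus v) / ?N) * triple (vplus v) (vplus v) v
      + (lprod y v / lprod v v) * triple v (vplus v) v"
    by (subst vector_decomposition[OF assms(1), of y]) (rule triple_linear_left)
  also have "\<dots> = (lprod y (vplus v) / ?N) * triple (vminus v) (vplus v) v"
    by (simp add: triple_repeat)
  finally show ?thesis .
qed

lemma triple_pos_iff_lprod_pos:
  assumes "spacelike v" "lprod x (vplus v) = 0" "null_frame_cond x y" "y \<noteq> vplus v"
  shows "triple y (vplus v) x > 0 \<longleftrightarrow> lprod x v > 0"
proof -
  note V = null_frame_lprod[OF assms(1)]
  have "lprod y (vplus v) < 0"
    using lprod_future_null_less[OF assms(3) null_frame(2)[OF assms(1)] assms(4)] .
  define \<kappa> where "\<kappa> = (lprod y (vplus v) / lprod (vminus v) (vplus v)) * triple (vminus v) (vplus v) v"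
  have "\<kappa> > 0"
    unfolding \<kappa>_def using \<open>lprod y (vplus v) < 0\<close> V(7,9) by (intro mult_pos_pos divide_neg_neg)
  moreover have "triple y (vplus v) x = (lprod x v / lprod v v) * \<kappa>"
    unfolding \<kappa>_def by (rule triple_vplus_orthogonal[OF assms(1,2)])
  ultimately show ?thesis
    using V(8) by (simp only: zero_less_mult_iff zero_less_divide_iff) auto
qed

lemma mem_Pset_vplus_iff:
  assumes "spacelike v"
  shows "x \<in> Pset (vplus v) \<longleftrightarrow> lprod x (vplus v) = 0 \<and> lprod x v > 0"
proof -
  note frame = null_frame[OF assms] and V = null_frame_lprod[OF assms]
  note key = triple_pos_iff_lprod_pos[OF assms]
  have unit: "norm (vplus v) = 1" using frame(2) by (simp add: null_frame_cond_def)
  show ?thesis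
  proof
    assume "x \<in> Pset (vplus v)"
    hence x: "spacelike x" "vplus x = vplus v" using mem_Pset_iff[OF unit] by auto
    note X = null_frame_lprod[OF x(1)]
    have "vminus x \<noteq> vplus v" using X(9) x(2) triple_repeat by auto
    moreover have "triple (vminus x) (vplus v) x > 0" using X(9) x(2) by simp
    ultimately show "lprod x (vplus v) = 0 \<and> lprod x v > 0"
      using key[of x "vminus x"] null_frame[OF x(1)] x(2) X(2) by (simp add: lprod_commute)
  next
    assume h: "lprod x (vplus v) = 0 \<and> lprod x v > 0"
    have "lprod x x = (lprod x v)^2 / lprod v v"
      using lprod_self_decomposition[OF assms, of x] h by simp
    hence x: "spacelike x" using h V(8) by (simp add: spacelike_def)
    have e: "null_frame_cond x (vplus v)"
      using frame(2) h by (simp add: null_frame_cond_def lprod_commute)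
    obtain y where y: "null_frame_cond x y" "y \<noteq> vplus v"
      using null_frame[OF x] null_frame_lprod(9)[OF x] triple_repeat by (metis less_irrefl)
    have "vplus v = vplus x"
      using vplus_eq_iff_triple_pos[OF x y(1) e] key[OF _ y] h y(2) by simp
    thus "x \<in> Pset (vplus v)" using x mem_Pset_iff[OF unit] by simp
  qed
qed

lemma mem_Pset_vminus_iff:
  assumes "spacelike v"
  shows "x \<in> Pset (vminus v) \<longleftrightarrow> lprod x (vminus v) = 0 \<and> lprod x v < 0"
proof -
  have "spacelike (- v)" using assms by (simp add: spacelike_def)
  from mem_Pset_vplus_iff[OF this, of x] show ?thesis by (simp add: vplus_uminus[OF assms])
qed

definition crooked_plane0 :: "real^3 \<Rightarrow> (real^3) set" where
  "crooked_plane0 v = {x.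
     (lprod x (vplus v) = 0 \<and> lprod x v > 0) \<or> (lprod x (vminus v) = 0 \<and> lprod x v < 0) \<or>
     (lprod x v = 0 \<and> lprod x (vminus v) * lprod x (vplus v) \<ge> 0)}"

lemma stem_iff:
  assumes "spacelike v"
  shows "lprod v x = 0 \<and> lprod x x \<le> 0 \<longleftrightarrow>
         lprod x v = 0 \<and> lprod x (vminus v) * lprod x (vplus v) \<ge> 0"
proof -
  have "lprod x v = 0 \<Longrightarrow>
      lprod x x = 2 * (lprod x (vminus v) * lprod x (vplus v)) / lprod (vminus v) (vplus v)"
    using lprod_self_decomposition[OF assms, of x] by simp
  thus ?thesis
    using null_frame_lprod(7)[OF assms] by (auto simp: lprod_commute[of v] divide_le_0_iff)
qed

lemma mem_crooked_plane_iff: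
  assumes "spacelike v"
  shows "y \<in> crooked_plane v q \<longleftrightarrow> y - q \<in> crooked_plane0 v"
proof -
  have translate: "y \<in> (\<lambda>x. q + x) ` S \<longleftrightarrow> y - q \<in> S" for S
    by (auto intro: image_eqI[of _ _ "y - q"])
  show ?thesis
    unfolding crooked_plane_def Un_iff translate mem_Collect_eq mem_Pset_vplus_iff[OF assms]
      mem_Pset_vminus_iff[OF assms] stem_iff[OF assms] crooked_plane0_def
    by blast
qed

lemma mem_crooked_halfspace_uminus_iff:
  assumes "spacelike u"
  shows "y \<in> crooked_halfspace (- u) p \<longleftrightarrow>
    (lprod (y - p) u \<le> 0 \<longrightarrow> lprod (y - p) (vminus u) \<le> 0) \<and>
    (lprod (y - p) u \<ge> 0 \<longrightarrow> lprod (y - p) (vplus u) \<ge> 0)"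
  by (auto simp: crooked_halfspace_def vplus_uminus[OF assms] vminus_uminus[OF assms])

lemma connected_crooked_plane0:
  assumes "spacelike v"
  shows "connected (crooked_plane0 v)"
proof -
  define sector where "sector a b c = {x. lprod x a = 0 \<and> 0 \<le> lprod x b \<and> 0 \<le> lprod x c}"
    for a b c :: "real^3"
  have "convex (sector a b c)" for a b c
    unfolding sector_def by (rule convexI) (auto intro!: add_nonneg_nonneg mult_nonneg_nonneg)
  hence connected: "connected (sector a b c)" for a b c by (rule convex_connected)
  have "crooked_plane0 v = sector (vplus v) v v \<union> sector (vminus v) (- v) (- v)
      \<union> sector v (vminus v) (vplus v) \<union> sector v (- vminus v) (- vplus v)"
    by (auto simp: crooked_plane0_def sector_def zero_le_mult_iff)
  moreover have zero: "0 \<in> sector a b c" for a b c by (simp add: sector_def)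
  ultimately show ?thesis
    by (simp only:) (intro connected_Un connected; use zero in blast)
qed

section \<open>A continuous function vanishing exactly on the crooked plane\<close>

definition median3 :: "real \<Rightarrow> real \<Rightarrow> real \<Rightarrow> real" where
  "median3 x y z = max (min x y) (min (max x y) z)"

text \<open>With \<open>P = \<langle>z, u\<^sup>+\<rangle>\<close>, \<open>M = \<langle>z, u\<^sup>-\<rangle>\<close>, \<open>S = \<langle>z, u\<rangle>\<close>: for \<open>S \<ge> 0\<close> the last two terms
  cancel and for \<open>S \<le> 0\<close> the first and the last. Each surviving median is squeezed
  between bounds of opposite sign, so has the sign of \<open>-P\<close> resp. \<open>M\<close>; at \<open>S = 0\<close> both reduce to
  \<open>median3 (-P) M 0\<close>.\<close>

definition crooked_side :: "real \<Rightarrow> real \<Rightarrow> real \<Rightarrow> real" where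
  "crooked_side P M S =
     median3 (- P) (max M 0 + max S 0) (min M 0 - max S 0)
     + median3 M (max (- P) 0 + max (- S) 0) (min (- P) 0 - max (- S) 0)
     - median3 (- P) M 0"

lemma median3_max_min_0: "median3 x (max y 0) (min y 0) = median3 x y 0"
  and median3_commute_0: "median3 x y 0 = median3 y x 0"
  by (auto simp: median3_def max_def min_def)

lemma median3_sign:
  assumes "c > 0" "d < 0"
  shows "median3 x c d > 0 \<longleftrightarrow> x > 0" "median3 x c d < 0 \<longleftrightarrow> x < 0"
  using assms by (auto simp: median3_def max_def min_def)

lemma median3_0_sign:
  "median3 x y 0 > 0 \<longleftrightarrow> x > 0 \<and> y > 0" "median3 x y 0 < 0 \<longleftrightarrow> x < 0 \<and> y < 0"
  by (auto simp: median3_def max_def min_def)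

lemma crooked_side_of_nonneg:
  assumes "S \<ge> 0"
  shows "crooked_side P M S = median3 (- P) (max M 0 + S) (min M 0 - S)"
  using assms by (simp add: crooked_side_def median3_max_min_0 median3_commute_0[of M])

lemma crooked_side_of_nonpos:
  assumes "S \<le> 0"
  shows "crooked_side P M S = median3 M (max (- P) 0 - S) (min (- P) 0 + S)"
  using assms by (simp add: crooked_side_def median3_max_min_0 max_absorb2)

lemma crooked_side_cases:
  obtains "S > 0" "crooked_side P M S > 0 \<longleftrightarrow> P < 0" "crooked_side P M S < 0 \<longleftrightarrow> P > 0"
  | "S < 0" "crooked_side P M S > 0 \<longleftrightarrow> M > 0" "crooked_side P M S < 0 \<longleftrightarrow> M < 0"
  | "S = 0" "crooked_side P M S = median3 (- P) M 0"
proof (cases S "0::real" rule: linorder_cases)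
  case greater
  have "max M 0 + S > 0" "min M 0 - S < 0" using greater by auto
  with greater that(1) show ?thesis
    by (simp add: crooked_side_of_nonneg median3_sign)
next
  case less
  have "max (- P) 0 - S > 0" "min (- P) 0 + S < 0" using less by auto
  with less that(2) show ?thesis
    by (simp add: crooked_side_of_nonpos median3_sign)
next
  case equal
  with that(3) show ?thesis
    by (simp add: crooked_side_of_nonneg median3_max_min_0)
qed

lemma crooked_side_neg:
  assumes "(S > 0 \<and> P > 0) \<or> (S < 0 \<and> M < 0) \<or> (S = 0 \<and> P > 0 \<and> M < 0)"
  shows "crooked_side P M S < 0"
  by (rule crooked_side_cases[where P = P and M = M and S = S]) (use assms median3_0_sign in auto)

lemma crooked_side_neg_imp:
  assumes "crooked_side P M S < 0"
  shows "(S \<le> 0 \<longrightarrow> M \<le> 0) \<and> (S \<ge> 0 \<longrightarrow> P \<ge> 0)"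
  by (rule crooked_side_cases[where P = P and M = M and S = S])
    (use assms median3_0_sign in auto)

lemma crooked_side_eq_0_imp:
  assumes "crooked_side P M S = 0"
  shows "(P = 0 \<and> S > 0) \<or> (M = 0 \<and> S < 0) \<or> (S = 0 \<and> M * P \<ge> 0)"
  by (rule crooked_side_cases[where P = P and M = M and S = S])
    (use assms median3_0_sign[of "- P" M] in \<open>auto simp: zero_le_mult_iff\<close>)

lemma continuous_on_crooked_side [continuous_intros]:
  "continuous_on S f \<Longrightarrow>
     continuous_on S (\<lambda>z. crooked_side (lprod (f z) a) (lprod (f z) b) (lprod (f z) c))"
  unfolding crooked_side_def median3_def by (intro continuous_intros)

lemma connected_continuous_has_zero:
  fixes f :: "'a::topological_space \<Rightarrow> real"
  assumes "connected S" "continuous_on S f" "a \<in> S" "b \<in> S" "f a \<le> 0" "0 \<le> f b"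
  shows "\<exists>z\<in>S. f z = 0"
proof -
  have "connected (f ` S)" using assms(2,1) by (rule connected_continuous_image)
  hence "{f a .. f b} \<subseteq> f ` S" using assms(3,4) by (intro connected_contains_Icc) auto
  thus ?thesis using assms(5,6) by force
qed

section \<open>Translates of a crooked plane meeting the negative side\<close>

lemma stem_subset_crooked_plane0:
  assumes "spacelike v" "lprod v x = 0" "lprod x x \<le> 0"
  shows "x \<in> crooked_plane0 v"
  unfolding crooked_plane0_def using stem_iff[OF assms(1), of x] assms(2,3) by blast

lemma ex_pos_scale_dominates:
  assumes "(a::real) > 0" "c > 0"
  shows "\<exists>t>0. b < t * a \<and> d < t * c"
proof -
  define t where "t = 1 + \<bar>b\<bar> / a + \<bar>d\<bar> / c"
  have "t * a = a + \<bar>b\<bar> + \<bar>d\<bar> / c * a" "t * c = c + \<bar>b\<bar> / a * c + \<bar>d\<bar>"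
    using assms by (simp_all add: t_def algebra_simps)
  moreover have "\<bar>d\<bar> / c * a \<ge> 0" "\<bar>b\<bar> / a * c \<ge> 0" "t > 0"
    using assms by (simp_all add: t_def add_pos_nonneg)
  ultimately have "t > 0" "b < t * a" "d < t * c"
    using assms by linarith+
  thus ?thesis by blast
qed

lemma negative_side_point_antiparallel:
  assumes su: "spacelike u" and c: "c < 0"
    and disjoint: "\<And>z. z \<in> crooked_plane0 u \<Longrightarrow> z - w \<notin> crooked_plane0 (c *\<^sub>R u)"
  shows "\<exists>g. g - w \<in> crooked_plane0 (c *\<^sub>R u) \<and>
           crooked_side (lprod g (vplus u)) (lprod g (vminus u)) (lprod g u) < 0"
proof -
  let ?m = "vminus u" and ?n = "vplus u" and ?N = "lprod (vminus u) (vplus u)"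
  note U = null_frame_lprod[OF su]
  have scv: "spacelike (c *\<^sub>R u)" using spacelike_scaleR[OF su] c by simp
  have stem: "a *\<^sub>R ?m \<in> crooked_plane0 u" "a *\<^sub>R ?n \<in> crooked_plane0 u"
    "a *\<^sub>R ?m \<in> crooked_plane0 (c *\<^sub>R u)" "a *\<^sub>R ?n \<in> crooked_plane0 (c *\<^sub>R u)" for a
    using U by (auto intro!: stem_subset_crooked_plane0 su scv)
  consider "lprod w u > 0" | "lprod w u < 0" | "lprod w u = 0" by linarith
  thus ?thesis
  proof cases
    case 1
    obtain t where "t > 0" "- lprod w ?n < t * (- ?N)"
      using ex_pos_scale_dominates[of "- ?N" 1 "- lprod w ?n" 0] U(7) by auto
    hence "crooked_side (lprod (w - t *\<^sub>R ?m) ?n) (lprod (w - t *\<^sub>R ?m) ?m) (lprod (w - t *\<^sub>R ?m) u) < 0"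
      using 1 U by (intro crooked_side_neg) simp
    thus ?thesis using stem(3)[of "- t"] by (intro exI[of _ "w - t *\<^sub>R ?m"]) simp
  next
    case 2
    obtain t where "t > 0" "lprod w ?m < t * (- ?N)"
      using ex_pos_scale_dominates[of "- ?N" 1 "lprod w ?m" 0] U(7) by auto
    hence "crooked_side (lprod (w + t *\<^sub>R ?n) ?n) (lprod (w + t *\<^sub>R ?n) ?m) (lprod (w + t *\<^sub>R ?n) u) < 0"
      using 2 U by (intro crooked_side_neg) (simp add: lprod_commute[of ?n ?m])
    thus ?thesis using stem(4)[of t] by (intro exI[of _ "w + t *\<^sub>R ?n"]) simp
  next
    case 3
    \<comment> \<open>then \<open>w\<close> lies in the null plane spanned by \<open>u\<^sup>-\<close> and \<open>u\<^sup>+\<close>, and the two stems meet\<close>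
    have w: "w = (lprod w ?n / ?N) *\<^sub>R ?m + (lprod w ?m / ?N) *\<^sub>R ?n"
      using vector_decomposition[OF su, of w] 3 by simp
    have "(lprod w ?n / ?N) *\<^sub>R ?m - w = (- (lprod w ?m / ?N)) *\<^sub>R ?n"
      by (subst (2) w) simp
    thus ?thesis using disjoint stem(1,4) by metis
  qed
qed

lemma negative_side_point:
  assumes su: "spacelike u" and sv: "spacelike v"
    and "lprod v (vplus u) \<le> 0" "lprod v (vminus u) \<le> 0" "lprod v u < 0"
    and disjoint: "\<And>z. z \<in> crooked_plane0 u \<Longrightarrow> z - w \<notin> crooked_plane0 v"
  shows "\<exists>g. g - w \<in> crooked_plane0 v \<and>
           crooked_side (lprod g (vplus u)) (lprod g (vminus u)) (lprod g u) < 0"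
proof -
  let ?m = "vminus u" and ?n = "vplus u"
  have ray: "t *\<^sub>R v \<in> crooked_plane0 v" if "t > 0" for t
    using null_frame_lprod[OF sv] that by (simp add: crooked_plane0_def)
  consider "lprod v ?m < 0" | "lprod v ?n < 0" | "lprod v ?m = 0" "lprod v ?n = 0"
    using assms(3,4) by linarith
  thus ?thesis
  proof cases
    case 1
    obtain t where t: "t > 0" "lprod w u < t * (- lprod v u)" "lprod w ?m < t * (- lprod v ?m)"
      using ex_pos_scale_dominates[of "- lprod v u" "- lprod v ?m"] assms(5) 1 by auto
    hence "crooked_side (lprod (w + t *\<^sub>R v) ?n) (lprod (w + t *\<^sub>R v) ?m) (lprod (w + t *\<^sub>R v) u) < 0"
      by (intro crooked_side_neg) (simp add: lprod_commute[of v])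
    thus ?thesis using ray[OF t(1)] by (intro exI[of _ "w + t *\<^sub>R v"]) simp
  next
    case 2
    obtain t where t: "t > 0" "- lprod w u < t * (- lprod v u)" "- lprod w ?n < t * (- lprod v ?n)"
      using ex_pos_scale_dominates[of "- lprod v u" "- lprod v ?n" "- lprod w u" "- lprod w ?n"]
        assms(5) 2 by auto
    hence "crooked_side (lprod (w - t *\<^sub>R v) ?n) (lprod (w - t *\<^sub>R v) ?m) (lprod (w - t *\<^sub>R v) u) < 0"
      by (intro crooked_side_neg) (simp add: lprod_commute[of v])
    moreover have "(w - t *\<^sub>R v) - w \<in> crooked_plane0 v"
      using null_frame_lprod[OF sv] t(1) by (simp add: crooked_plane0_def)
    ultimately show ?thesis by blast
  next
    case 3
    define c where "c = lprod v u / lprod u u"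
    have "c < 0" using assms(5) null_frame_lprod(8)[OF su] by (simp add: c_def divide_neg_pos)
    moreover have "v = c *\<^sub>R u"
      using vector_decomposition[OF su, of v] 3 by (simp add: c_def)
    ultimately show ?thesis
      using negative_side_point_antiparallel[OF su] disjoint by metis
  qed
qed

lemma crooked_side_neg_on_translate:
  assumes "spacelike u" and sv: "spacelike v"
    and "lprod v (vplus u) \<le> 0" "lprod v (vminus u) \<le> 0" "lprod v u < 0"
    and disjoint: "\<And>z. z \<in> crooked_plane0 u \<Longrightarrow> z - w \<notin> crooked_plane0 v"
    and x: "x \<in> crooked_plane0 v"
  shows "crooked_side (lprod (w + x) (vplus u)) (lprod (w + x) (vminus u)) (lprod (w + x) u) < 0"
proof (rule ccontr)
  define F where "F x = crooked_side (lprod (w + x) (vplus u)) (lprod (w + x) (vminus u)) (lprod (w + x) u)"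
    for x
  assume "\<not> ?thesis"
  hence Fx: "F x \<ge> 0" by (simp add: F_def)
  obtain g where "g - w \<in> crooked_plane0 v" "F (g - w) < 0"
    using negative_side_point[OF assms(1-6)] by (auto simp: F_def)
  moreover have "continuous_on (crooked_plane0 v) F" unfolding F_def by (intro continuous_intros)
  ultimately obtain z where "z \<in> crooked_plane0 v" "F z = 0"
    using connected_continuous_has_zero[OF connected_crooked_plane0[OF sv] _ _ x, of F "g - w"] Fx
    by (meson less_imp_le)
  moreover from \<open>F z = 0\<close> have "w + z \<in> crooked_plane0 u"
    unfolding F_def crooked_plane0_def by (auto dest: crooked_side_eq_0_imp)
  ultimately show False using disjoint[of "w + z"] by simp
qed

lemma consistently_oriented_pair_iff:
  "consistently_oriented [u, v] \<longleftrightarrow> spacelike u \<and> spacelike v \<and>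
     lprod u v < 0 \<and> lprod u (vplus v) \<le> 0 \<and> lprod u (vminus v) \<le> 0 \<and>
     lprod v u < 0 \<and> lprod v (vplus u) \<le> 0 \<and> lprod v (vminus u) \<le> 0"
  unfolding consistently_oriented_def by (auto simp: less_Suc_eq)

theorem lemma4p2:
  fixes u v p w :: "real^3"
  assumes "consistently_oriented [u, v]"
    and "crooked_plane u p \<inter> crooked_plane v (p + w) = {}"
  shows "crooked_plane v (p + w) \<subseteq> crooked_halfspace (- u) p"
proof
  have su: "spacelike u" and sv: "spacelike v"
    and v_u: "lprod v (vplus u) \<le> 0" "lprod v (vminus u) \<le> 0" "lprod v u < 0"
    using assms(1) by (simp_all add: consistently_oriented_pair_iff)
  have disjoint: "z - w \<notin> crooked_plane0 v" if "z \<in> crooked_plane0 u" for z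
  proof
    assume "z - w \<in> crooked_plane0 v"
    hence "p + z \<in> crooked_plane u p \<inter> crooked_plane v (p + w)"
      using that by (simp add: mem_crooked_plane_iff[OF su] mem_crooked_plane_iff[OF sv])
    thus False using assms(2) by simp
  qed
  fix y assume "y \<in> crooked_plane v (p + w)"
  hence "y - p - w \<in> crooked_plane0 v" by (simp add: mem_crooked_plane_iff[OF sv] diff_diff_eq)
  from crooked_side_neg_on_translate[OF su sv v_u disjoint this]
  have "crooked_side (lprod (y - p) (vplus u)) (lprod (y - p) (vminus u)) (lprod (y - p) u) < 0"
    by simp
  thus "y \<in> crooked_halfspace (- u) p"
    unfolding mem_crooked_halfspace_uminus_iff[OF su] by (rule crooked_side_neg_imp)
qed

end
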